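(* Let $X_1$, $X_2$ and $Y$ be real Banach spaces, let $A$ be a separable subset of $X_1\oplus_\infty X_2$, and let $\Delta:S_{X_1\oplus_\infty X_2}\to S_Y$ be a surjective isometry. Then there exist separable subspaces $M_1\subseteq X_1$, $M_2\subseteq X_2$ and $N\subseteq Y$ such that $A\subseteq M_1\oplus_\infty M_2$ and $\Delta(S_{M_1\oplus_\infty M_2})=S_N$.
   Context: $X_1\oplus_\infty X_2$ is $X_1\times X_2$ with norm $\|(x_1,x_2)\|=\max\{\|x_1\|,\|x_2\|\}$; $S_E$ denotes the unit sphere of a normed space $E$. *)

theory Defs
  imports "HOL-Analysis.Analysis"
begin

text \<open>The space X1 (+)_inf X2 is modelled on the product type 'a \<times> 'b, but with the
  max-norm made explicit (the library's product norm is the Euclidean one).\<close>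

definition supnorm :: "('a::real_normed_vector) \<times> ('b::real_normed_vector) \<Rightarrow> real" where
  "supnorm z = max (norm (fst z)) (norm (snd z))"

definition supsphere :: "'a::real_normed_vector set \<Rightarrow> 'b::real_normed_vector set \<Rightarrow> ('a \<times> 'b) set" where
  "supsphere M1 M2 = {z. fst z \<in> M1 \<and> snd z \<in> M2 \<and> supnorm z = 1}"

definition usphere :: "'c::real_normed_vector set \<Rightarrow> 'c set" where
  "usphere N = {y \<in> N. norm y = 1}"

definition separable_set :: "'c::real_normed_vector set \<Rightarrow> bool" where
  "separable_set A \<longleftrightarrow> (\<exists>D. countable D \<and> D \<subseteq> A \<and>
     (\<forall>a\<in>A. \<forall>e>0. \<exists>d\<in>D. norm (a - d) < e))"

definition sup_separable :: "('a::real_normed_vector \<times> 'b::real_normed_vector) set \<Rightarrow> bool" where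
  "sup_separable A \<longleftrightarrow> (\<exists>D. countable D \<and> D \<subseteq> A \<and>
     (\<forall>a\<in>A. \<forall>e>0. \<exists>d\<in>D. supnorm (a - d) < e))"

definition closed_subspace :: "'c::real_normed_vector set \<Rightarrow> bool" where
  "closed_subspace M \<longleftrightarrow> subspace M \<and> closed M"

end

theory Submission
  imports Defs
begin

text \<open>
  A countable closing-off argument. Starting from a countable dense subset of A, enlarge countable
  sets C1, C2, D in X1, X2, Y in \<omega> rounds: add to D the images under \<Delta> of the normalised rational
  combinations of C1 \<times> C2, and add to C1, C2 the coordinates of the \<Delta>-preimages of the normalised
  rational combinations of D. The closures M1, M2, N of the rational spans of the limits are
  separable closed subspaces. Normalised rational combinations are dense in the unit spheres of
  M1 (+)_inf M2 and of N, and \<Delta> and its inverse are isometries between the unit spheres, hence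
  continuous; so \<Delta> maps the sphere of M1 (+)_inf M2 into that of N, and its inverse maps the
  sphere of N back.
\<close>

text \<open>Rational linear combinations are encoded as lists of (coefficient, vector) pairs, which makes
  countability immediate.\<close>

definition rat_span :: "'v::real_vector set \<Rightarrow> 'v set" where
  "rat_span C = (\<lambda>xs. sum_list (map (\<lambda>(q, c). real_of_rat q *\<^sub>R c) xs)) ` lists (UNIV \<times> C)"

lemma countable_rat_span: "countable C \<Longrightarrow> countable (rat_span C)"
  unfolding rat_span_def by (intro countable_image countable_lists countable_SIGMA) auto

lemma rat_span_mono: "C \<subseteq> D \<Longrightarrow> rat_span C \<subseteq> rat_span D"
  unfolding rat_span_def by (intro image_mono lists_mono) auto

lemma rat_span_superset: "C \<subseteq> rat_span C"
proof
  fix c assume "c \<in> C"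
  then show "c \<in> rat_span C"
    unfolding rat_span_def by (intro image_eqI[where x="[(1, c)]"]) auto
qed

lemma zero_in_rat_span: "0 \<in> rat_span C"
  unfolding rat_span_def by (rule image_eqI[where x="[]"]) auto

lemma rat_span_add: "x \<in> rat_span C \<Longrightarrow> y \<in> rat_span C \<Longrightarrow> x + y \<in> rat_span C"
  unfolding rat_span_def by (auto intro!: image_eqI[where x="_ @ _"])

lemma rat_span_scaleR_rat:
  assumes "x \<in> rat_span C"
  shows "real_of_rat r *\<^sub>R x \<in> rat_span C"
proof -
  obtain xs where xs: "xs \<in> lists (UNIV \<times> C)"
    and x: "x = sum_list (map (\<lambda>(q, c). real_of_rat q *\<^sub>R c) xs)"
    using assms unfolding rat_span_def by auto
  let ?ys = "map (\<lambda>(q, c). (r * q, c)) xs"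
  have "real_of_rat r *\<^sub>R x = sum_list (map (\<lambda>(q, c). real_of_rat q *\<^sub>R c) ?ys)"
    unfolding x by (induction xs) (auto simp: scaleR_add_right of_rat_mult)
  moreover have "?ys \<in> lists (UNIV \<times> C)"
    using xs by auto
  ultimately show ?thesis
    unfolding rat_span_def by blast
qed

lemma lists_Union_incseq:
  assumes "incseq C"
  shows "lists (\<Union>n. C n) = (\<Union>n. lists (C n))"
proof
  show "lists (\<Union>n. C n) \<subseteq> (\<Union>n. lists (C n))"
  proof
    fix xs assume "xs \<in> lists (\<Union>n. C n)"
    then show "xs \<in> (\<Union>n. lists (C n))"
    proof (induction xs)
      case (Cons x xs)
      then obtain m n where "x \<in> C m" "xs \<in> lists (C n)"
        by auto
      moreover have "C m \<subseteq> C (max m n)" "C n \<subseteq> C (max m n)"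
        using assms by (simp_all add: incseqD)
      ultimately have "x # xs \<in> lists (C (max m n))"
        by (auto dest: lists_mono[THEN subsetD, rotated])
      then show ?case
        by blast
    qed auto
  qed
qed (auto intro: lists_mono[THEN subsetD, rotated])

lemma rat_span_Union_incseq:
  assumes "incseq C"
  shows "rat_span (\<Union>n. C n) = (\<Union>n. rat_span (C n))"
proof -
  have "lists (UNIV \<times> (\<Union>n. C n)) = lists (\<Union>n. UNIV \<times> C n)"
    by (rule arg_cong[where f=lists]) auto
  also have "\<dots> = (\<Union>n. lists (UNIV \<times> C n))"
    using assms by (intro lists_Union_incseq) (auto simp: incseq_def)
  finally show ?thesis
    unfolding rat_span_def by (metis image_UN)
qed

lemma subspace_closure_rat_span:
  fixes C :: "'v::real_normed_vector set"
  shows "subspace (closure (rat_span C))"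
proof -
  let ?Q = "closure (rat_span C)"
  have add: "x + y \<in> ?Q" if "x \<in> ?Q" "y \<in> ?Q" for x y
  proof -
    have "(\<lambda>y. y + q) ` ?Q \<subseteq> ?Q" if "q \<in> rat_span C" for q
      by (rule image_closure_subset)
        (auto intro: continuous_intros closure_subset[THEN subsetD] rat_span_add that)
    then have "(\<lambda>y. y + x) ` rat_span C \<subseteq> ?Q"
      using \<open>x \<in> ?Q\<close> by (auto simp: add.commute)
    then have "(\<lambda>y. y + x) ` ?Q \<subseteq> ?Q"
      by (intro image_closure_subset) (auto intro: continuous_intros)
    then show ?thesis
      using \<open>y \<in> ?Q\<close> by auto
  qed
  have scale: "c *\<^sub>R x \<in> ?Q" if "x \<in> ?Q" for x c
  proof -
    have "(\<lambda>y. real_of_rat r *\<^sub>R y) ` ?Q \<subseteq> ?Q" for r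
      by (rule image_closure_subset)
        (auto intro: continuous_intros closure_subset[THEN subsetD] rat_span_scaleR_rat)
    then have "(\<lambda>c. c *\<^sub>R x) ` \<rat> \<subseteq> ?Q"
      using that by (auto elim!: Rats_cases)
    then have "(\<lambda>c. c *\<^sub>R x) ` closure \<rat> \<subseteq> ?Q"
      by (intro image_closure_subset) (auto intro: continuous_intros)
    then show ?thesis
      by (auto simp: Rats_closure_real)
  qed
  show ?thesis
    unfolding subspace_def using add scale zero_in_rat_span closure_subset by blast
qed

lemma separable_closure_rat_span: "countable C \<Longrightarrow> separable_set (closure (rat_span C))"
  unfolding separable_set_def
  by (intro exI[where x="rat_span C"])
    (auto simp: countable_rat_span closure_subset dist_norm dest!: closure_approachableD)

lemma continuous_on_image_closure_subset:
  assumes "continuous_on S h" "P \<subseteq> S"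
  shows "h ` (S \<inter> closure P) \<subseteq> closure (h ` P)"
proof -
  have "continuous_map (top_of_set S) euclidean h"
    using assms(1) by (simp add: continuous_map_iff_continuous)
  then have "h ` (top_of_set S closure_of P) \<subseteq> euclidean closure_of (h ` P)"
    by (auto simp: continuous_map_eq_image_closure_subset)
  then show ?thesis
    using assms(2) by (simp add: closure_of_subtopology Int_absorb1)
qed

lemma in_closure_normalized:
  fixes \<nu> :: "'v::real_normed_vector \<Rightarrow> real"
  assumes "continuous_on UNIV \<nu>" "\<nu> z = 1" "z \<in> closure W"
  shows "z \<in> closure ((\<lambda>w. w /\<^sub>R \<nu> w) ` {w \<in> W. \<nu> w \<noteq> 0})"
proof -
  define S where "S = {w. \<nu> w \<noteq> 0}"
  have "open S"
    using assms(1) by (simp add: S_def continuous_on_eq_continuous_at open_Collect_neq)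
  then have "z \<in> S \<inter> closure (S \<inter> W)"
    using assms(2,3) open_Int_closure_subset by (fastforce simp: S_def)
  moreover have "continuous_on S (\<lambda>w. w /\<^sub>R \<nu> w)"
    using assms(1) by (intro continuous_intros) (auto simp: S_def elim: continuous_on_subset)
  ultimately have "z /\<^sub>R \<nu> z \<in> closure ((\<lambda>w. w /\<^sub>R \<nu> w) ` (S \<inter> W))"
    using continuous_on_image_closure_subset[OF _ Int_lower1] by fast
  moreover have "S \<inter> W = {w \<in> W. \<nu> w \<noteq> 0}"
    by (auto simp: S_def)
  ultimately show ?thesis
    using assms(2) by simp
qed

lemma supnorm_le_norm: "supnorm z \<le> norm z"
  using norm_fst_le[of "fst z" "snd z"] norm_snd_le[of "snd z" "fst z"]
  by (simp add: supnorm_def)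

lemma norm_le_twice_supnorm: "norm z \<le> 2 * supnorm z"
  using norm_Pair_le[of "fst z" "snd z"] by (simp add: supnorm_def)

lemma supnorm_scaleR: "supnorm (c *\<^sub>R z) = \<bar>c\<bar> * supnorm z"
  by (simp add: supnorm_def max_mult_distrib_left)

lemma supnorm_nonneg: "0 \<le> supnorm z"
  by (simp add: supnorm_def le_max_iff_disj)

lemma supnorm_normalize: "supnorm z \<noteq> 0 \<Longrightarrow> supnorm (z /\<^sub>R supnorm z) = 1"
  using supnorm_nonneg[of z] by (simp add: supnorm_scaleR)

lemma continuous_on_supnorm: "continuous_on S supnorm"
  unfolding supnorm_def by (intro continuous_intros)

lemma in_closure_supnorm_approachable:
  assumes "\<forall>e>0. \<exists>d\<in>D. supnorm (a - d) < e"
  shows "a \<in> closure D"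
  unfolding closure_approachable
proof (intro allI impI)
  fix e :: real assume "e > 0"
  then obtain d where "d \<in> D" "supnorm (a - d) < e / 2"
    using assms half_gt_zero by blast
  moreover have "dist d a \<le> 2 * supnorm (a - d)"
    using norm_le_twice_supnorm[of "a - d"] by (simp add: dist_norm norm_minus_commute)
  ultimately show "\<exists>d\<in>D. dist d a < e"
    by force
qed

lemma Times_Union_incseq:
  assumes "incseq A" "incseq B"
  shows "(\<Union>n. A n) \<times> (\<Union>n. B n) = (\<Union>n. A n \<times> B n)"
proof
  show "(\<Union>n. A n) \<times> (\<Union>n. B n) \<subseteq> (\<Union>n. A n \<times> B n)"
  proof
    fix p assume "p \<in> (\<Union>n. A n) \<times> (\<Union>n. B n)"
    then obtain m n where "fst p \<in> A m" "snd p \<in> B n"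
      by (auto simp: mem_Times_iff)
    then have "p \<in> A (max m n) \<times> B (max m n)"
      using assms incseqD[of A m "max m n"] incseqD[of B n "max m n"] by (auto simp: mem_Times_iff)
    then show "p \<in> (\<Union>n. A n \<times> B n)"
      by blast
  qed
qed auto

lemma rat_span_closed_Union_incseq:
  assumes inc: "incseq C1" "incseq C2" "incseq D"
    and f: "\<And>n. f ` (rat_span (C1 n) \<times> rat_span (C2 n)) \<subseteq> D (Suc n)"
    and g: "\<And>n. g ` rat_span (D n) \<subseteq> C1 (Suc n) \<times> C2 (Suc n)"
  shows "f ` (rat_span (\<Union>n. C1 n) \<times> rat_span (\<Union>n. C2 n)) \<subseteq> (\<Union>n. D n)"
    and "g ` rat_span (\<Union>n. D n) \<subseteq> (\<Union>n. C1 n) \<times> (\<Union>n. C2 n)"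
proof -
  have "incseq (\<lambda>n. rat_span (C1 n))" "incseq (\<lambda>n. rat_span (C2 n))"
    using inc rat_span_mono unfolding incseq_def by meson+
  then have "rat_span (\<Union>n. C1 n) \<times> rat_span (\<Union>n. C2 n) = (\<Union>n. rat_span (C1 n) \<times> rat_span (C2 n))"
    using inc by (simp add: rat_span_Union_incseq Times_Union_incseq)
  moreover have "f ` (rat_span (C1 n) \<times> rat_span (C2 n)) \<subseteq> (\<Union>n. D n)" for n
    using f[of n] by blast
  ultimately show "f ` (rat_span (\<Union>n. C1 n) \<times> rat_span (\<Union>n. C2 n)) \<subseteq> (\<Union>n. D n)"
    by (simp add: image_UN UN_least)
  have "C1 (Suc n) \<times> C2 (Suc n) \<subseteq> (\<Union>n. C1 n) \<times> (\<Union>n. C2 n)" for n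
    by (intro Sigma_mono UN_upper) auto
  then have "g ` rat_span (D n) \<subseteq> (\<Union>n. C1 n) \<times> (\<Union>n. C2 n)" for n
    using g[of n] by (rule order_trans[rotated])
  then show "g ` rat_span (\<Union>n. D n) \<subseteq> (\<Union>n. C1 n) \<times> (\<Union>n. C2 n)"
    unfolding rat_span_Union_incseq[OF inc(3)] image_UN by (rule UN_least)
qed

lemma countable_rat_span_closed:
  fixes f :: "'a::real_vector \<times> 'b::real_vector \<Rightarrow> 'c::real_vector"
    and g :: "'c \<Rightarrow> 'a \<times> 'b"
  assumes "countable A"
  obtains C1 C2 D where "countable C1" "countable C2" "countable D" "A \<subseteq> C1 \<times> C2"
    "f ` (rat_span C1 \<times> rat_span C2) \<subseteq> D" "g ` rat_span D \<subseteq> C1 \<times> C2"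
proof -
  define step where "step = (\<lambda>(C1, C2, D).
    (C1 \<union> fst ` g ` rat_span D, C2 \<union> snd ` g ` rat_span D, D \<union> f ` (rat_span C1 \<times> rat_span C2)))"
  define c1 where "c1 n = fst ((step ^^ n) (fst ` A, snd ` A, {}))" for n
  define c2 where "c2 n = fst (snd ((step ^^ n) (fst ` A, snd ` A, {})))" for n
  define d where "d n = snd (snd ((step ^^ n) (fst ` A, snd ` A, {})))" for n
  have stage_Suc: "c1 (Suc n) = c1 n \<union> fst ` g ` rat_span (d n)"
    "c2 (Suc n) = c2 n \<union> snd ` g ` rat_span (d n)"
    "d (Suc n) = d n \<union> f ` (rat_span (c1 n) \<times> rat_span (c2 n))" for n
    unfolding c1_def c2_def d_def by (auto simp: step_def split: prod.splits)
  have countable_stage: "countable (c1 n) \<and> countable (c2 n) \<and> countable (d n)" for n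
  proof (induction n)
    case 0
    then show ?case
      using assms by (simp add: c1_def c2_def d_def)
  next
    case (Suc n)
    then show ?case
      by (simp add: stage_Suc countable_rat_span)
  qed
  have "g y \<in> c1 (Suc n) \<times> c2 (Suc n)" if "y \<in> rat_span (d n)" for y n
    using that by (auto simp: stage_Suc mem_Times_iff)
  then have g: "g ` rat_span (d n) \<subseteq> c1 (Suc n) \<times> c2 (Suc n)" for n
    by blast
  have inc: "incseq c1" "incseq c2" "incseq d"
    by (auto intro!: incseq_SucI simp: stage_Suc)
  show ?thesis
  proof (rule that)
    show "countable (\<Union>n. c1 n)" "countable (\<Union>n. c2 n)" "countable (\<Union>n. d n)"
      using countable_stage by auto
    have "c1 0 \<times> c2 0 \<subseteq> (\<Union>n. c1 n) \<times> (\<Union>n. c2 n)"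
      by (intro Sigma_mono UN_upper) auto
    then show "A \<subseteq> (\<Union>n. c1 n) \<times> (\<Union>n. c2 n)"
      using subset_fst_snd[of A] by (simp add: c1_def c2_def)
    show "f ` (rat_span (\<Union>n. c1 n) \<times> rat_span (\<Union>n. c2 n)) \<subseteq> (\<Union>n. d n)"
      "g ` rat_span (\<Union>n. d n) \<subseteq> (\<Union>n. c1 n) \<times> (\<Union>n. c2 n)"
      using rat_span_closed_Union_incseq[where f=f, OF inc _ g] by (simp_all add: stage_Suc)
  qed
qed

locale sphere_isometry =
  fixes \<Delta> :: "'a::real_normed_vector \<times> 'b::real_normed_vector \<Rightarrow> 'c::real_normed_vector"
  assumes onto: "\<Delta> ` supsphere UNIV UNIV = usphere UNIV"
    and isometric: "\<And>u v. u \<in> supsphere UNIV UNIV \<Longrightarrow> v \<in> supsphere UNIV UNIV \<Longrightarrow>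
      norm (\<Delta> u - \<Delta> v) = supnorm (u - v)"
begin

definition inv_sphere :: "'c \<Rightarrow> 'a \<times> 'b" where
  "inv_sphere = inv_into (supsphere UNIV UNIV) \<Delta>"

lemma inv_sphere:
  assumes "y \<in> usphere UNIV"
  shows "inv_sphere y \<in> supsphere UNIV UNIV" "\<Delta> (inv_sphere y) = y"
  using assms onto unfolding inv_sphere_def by (auto intro: inv_into_into f_inv_into_f)

lemma continuous_on_sphere: "continuous_on (supsphere UNIV UNIV) \<Delta>"
proof (rule lipschitz_on_continuous_on)
  show "1-lipschitz_on (supsphere UNIV UNIV) \<Delta>"
    using isometric supnorm_le_norm by (intro lipschitz_onI) (simp_all add: dist_norm)
qed

lemma continuous_on_inv_sphere: "continuous_on (usphere UNIV) inv_sphere"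
proof (rule lipschitz_on_continuous_on)
  have "supnorm (inv_sphere u - inv_sphere v) = norm (u - v)"
    if "u \<in> usphere UNIV" "v \<in> usphere UNIV" for u v
    using isometric[OF inv_sphere(1)[OF that(1)] inv_sphere(1)[OF that(2)]] inv_sphere(2) that
    by simp
  then show "2-lipschitz_on (usphere UNIV) inv_sphere"
    by (intro lipschitz_onI) (auto simp: dist_norm intro: order_trans[OF norm_le_twice_supnorm])
qed

lemma sphere_closure_image_subset:
  assumes "(\<lambda>w. \<Delta> (w /\<^sub>R supnorm w)) ` (Q1 \<times> Q2) \<subseteq> Q"
  shows "\<Delta> ` supsphere (closure Q1) (closure Q2) \<subseteq> usphere (closure Q)"
proof
  fix y assume "y \<in> \<Delta> ` supsphere (closure Q1) (closure Q2)"
  then obtain z where z: "z \<in> closure (Q1 \<times> Q2)" "supnorm z = 1" "y = \<Delta> z"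
    by (auto simp: supsphere_def closure_Times mem_Times_iff)
  define P where "P = (\<lambda>w. w /\<^sub>R supnorm w) ` {w \<in> Q1 \<times> Q2. supnorm w \<noteq> 0}"
  have "P \<subseteq> supsphere UNIV UNIV"
    unfolding P_def supsphere_def using supnorm_normalize by blast
  moreover have "z \<in> supsphere UNIV UNIV"
    using z(2) by (simp add: supsphere_def)
  moreover have "z \<in> closure P"
    unfolding P_def using in_closure_normalized[OF continuous_on_supnorm z(2,1)] .
  ultimately have "\<Delta> z \<in> closure (\<Delta> ` P)"
    using continuous_on_image_closure_subset[OF continuous_on_sphere] by blast
  moreover have "\<Delta> ` P \<subseteq> Q"
    unfolding P_def image_image by (rule order_trans[OF image_mono assms]) auto
  ultimately have "y \<in> closure Q"
    using closure_mono z(3) by blast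
  moreover have "norm y = 1"
    using onto \<open>z \<in> supsphere UNIV UNIV\<close> z(3) by (auto simp: usphere_def)
  ultimately show "y \<in> usphere (closure Q)"
    by (simp add: usphere_def)
qed

lemma usphere_closure_subset_image:
  assumes "(\<lambda>y. inv_sphere (y /\<^sub>R norm y)) ` Q \<subseteq> Q1 \<times> Q2"
  shows "usphere (closure Q) \<subseteq> \<Delta> ` supsphere (closure Q1) (closure Q2)"
proof
  fix y assume "y \<in> usphere (closure Q)"
  then have y: "y \<in> closure Q" "norm y = 1" "y \<in> usphere UNIV"
    by (auto simp: usphere_def)
  define R where "R = (\<lambda>w. w /\<^sub>R norm w) ` {w \<in> Q. norm w \<noteq> 0}"
  have "R \<subseteq> usphere UNIV"
    by (auto simp: R_def usphere_def)
  moreover have "y \<in> closure R"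
    unfolding R_def using in_closure_normalized[OF continuous_on_norm_id y(2,1)] .
  ultimately have "inv_sphere y \<in> closure (inv_sphere ` R)"
    using continuous_on_image_closure_subset[OF continuous_on_inv_sphere] y(3) by blast
  moreover have "inv_sphere ` R \<subseteq> Q1 \<times> Q2"
    unfolding R_def image_image by (rule order_trans[OF image_mono assms]) auto
  ultimately have "inv_sphere y \<in> closure Q1 \<times> closure Q2"
    unfolding closure_Times[symmetric] using closure_mono by blast
  then have "inv_sphere y \<in> supsphere (closure Q1) (closure Q2)"
    using inv_sphere(1)[OF y(3)] by (auto simp: supsphere_def)
  then show "y \<in> \<Delta> ` supsphere (closure Q1) (closure Q2)"
    using inv_sphere(2)[OF y(3)] by force
qed

end

theorem lemma3p4:
  fixes A :: "('a::banach \<times> 'b::banach) set"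
    and \<Delta> :: "'a \<times> 'b \<Rightarrow> 'c::banach"
  assumes "sup_separable A"
    and "\<Delta> ` supsphere UNIV UNIV = usphere UNIV"
    and "\<forall>u\<in>supsphere UNIV UNIV. \<forall>v\<in>supsphere UNIV UNIV.
           norm (\<Delta> u - \<Delta> v) = supnorm (u - v)"
  shows "\<exists>M1 M2 N. closed_subspace M1 \<and> closed_subspace M2 \<and> closed_subspace N \<and>
           separable_set M1 \<and> separable_set M2 \<and> separable_set N \<and>
           A \<subseteq> M1 \<times> M2 \<and> \<Delta> ` supsphere M1 M2 = usphere N"
proof -
  interpret sphere_isometry \<Delta>
    using assms(2,3) by unfold_locales auto
  obtain D0 where D0: "countable D0" "\<forall>a\<in>A. \<forall>e>0. \<exists>d\<in>D0. supnorm (a - d) < e"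
    using assms(1) unfolding sup_separable_def by blast
  obtain C1 C2 D where C: "countable C1" "countable C2" "countable D" "D0 \<subseteq> C1 \<times> C2"
    and f: "(\<lambda>w. \<Delta> (w /\<^sub>R supnorm w)) ` (rat_span C1 \<times> rat_span C2) \<subseteq> D"
    and g: "(\<lambda>y. inv_sphere (y /\<^sub>R norm y)) ` rat_span D \<subseteq> C1 \<times> C2"
    using D0(1) by (rule countable_rat_span_closed)
  have rat_span_Times: "C1 \<times> C2 \<subseteq> rat_span C1 \<times> rat_span C2"
    by (intro Sigma_mono rat_span_superset)
  have "A \<subseteq> closure D0"
    using D0(2) in_closure_supnorm_approachable by blast
  also have "\<dots> \<subseteq> closure (rat_span C1 \<times> rat_span C2)"
    using C(4) rat_span_Times by (intro closure_mono) (rule order_trans)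
  finally have "A \<subseteq> closure (rat_span C1 \<times> rat_span C2)" .
  moreover have "\<Delta> ` supsphere (closure (rat_span C1)) (closure (rat_span C2)) = usphere (closure (rat_span D))"
    using order_trans[OF f rat_span_superset] order_trans[OF g rat_span_Times]
    by (intro subset_antisym sphere_closure_image_subset usphere_closure_subset_image)
  ultimately show ?thesis
    using C(1-3) by (intro exI[of _ "closure (rat_span C1)"] exI[of _ "closure (rat_span C2)"]
        exI[of _ "closure (rat_span D)"])
      (simp add: closure_Times closed_subspace_def subspace_closure_rat_span separable_closure_rat_span)
qed

end
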